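(* Let $d\ge 2$ be an integer, $D\in\{d,-d\}$, and let $a_1,\dots,a_d$ be integers forming a complete system of residues modulo $d$, so that $S=\{a_i \bmod D : 1\le i\le d\}$ is an exact covering system. Then every integer $n$ can be expressed as $n=\sum_{j=0}^k b_jD^j$ with $b_j\in\{a_1,\dots,a_d\}$ for some $k\in\mathbb{N}$ if and only if $G_S$ is (weakly) connected and its unique directed cycle contains $0$. Moreover, in that case the representation is unique up to leading copies of the block of digits of the cycle: if the cycle is $0=c_0\to c_1\to\cdots\to c_L=0$ with $c_t=Dc_{t-1}+e_t$, $e_t\in\{a_1,\dots,a_d\}$, then any two representations $\sum_{j=0}^k b_jD^j$ of the same integer $n$ differ only in that one is obtained from the other by prepending, in the most significant positions, some number of copies of the digit string $e_1e_2\cdots e_L$ (written most significant digit first).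
   Context: For $D=\pm d$, $n\equiv a \bmod D$ means $n\equiv a \bmod d$. The exact covering system digraph $G_S=G(Dn+a_1,\dots,Dn+a_d)$ has vertex set $\mathbb{Z}$ and edges $(n,Dn+a_i)$ for all $n\in\mathbb{Z}$ and $1\le i\le d$ (the $a_i$ are considered as specific representatives). Connectedness refers to the underlying undirected graph; cycles are directed cycles, loops included. Every vertex has indegree one, and when $G_S$ is connected it has exactly one directed cycle. Writing a representation as the digit string $b_kb_{k-1}\cdots b_0$, prepending a block $e_1\cdots e_L$ produces the string $e_1\cdots e_Lb_k\cdots b_0$. *)

theory Defs
  imports Main
begin

text \<open>Digit strings are lists written most significant digit first:
  the list [b_k, ..., b_0] has value sum_{j=0}^k b_j D^j.\<close>
definition digits_value :: "int \<Rightarrow> int list \<Rightarrow> int" where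
  "digits_value D bs = (\<Sum>j<length bs. rev bs ! j * D ^ j)"

text \<open>bs is a representation of n in base D with digits from A (k in N, so at least one digit).\<close>
definition is_rep :: "int \<Rightarrow> int set \<Rightarrow> int \<Rightarrow> int list \<Rightarrow> bool" where
  "is_rep D A n bs \<longleftrightarrow> bs \<noteq> [] \<and> set bs \<subseteq> A \<and> digits_value D bs = n"

definition cs_edges :: "int \<Rightarrow> int set \<Rightarrow> (int \<times> int) set" where
  "cs_edges D A = {(n, D * n + a) | n a. a \<in> A}"

definition weakly_connected :: "('v \<times> 'v) set \<Rightarrow> bool" where
  "weakly_connected E \<longleftrightarrow> (\<forall>x y. (x, y) \<in> (E \<union> E\<inverse>)\<^sup>*)"

text \<open>A directed cycle (loops allowed): distinct vertices c_0,...,c_{L-1}, L >= 1,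
  with edges c_i -> c_{i+1 mod L}.\<close>
definition dir_cycle :: "('v \<times> 'v) set \<Rightarrow> 'v list \<Rightarrow> bool" where
  "dir_cycle E cs \<longleftrightarrow> cs \<noteq> [] \<and> distinct cs \<and>
     (\<forall>i < length cs. (cs ! i, cs ! ((i + 1) mod length cs)) \<in> E)"

end

theory Submission
  imports Defs
begin

text \<open>Since the digits form a complete residue system modulo \<open>D\<close>, every integer \<open>m\<close> is
  uniquely \<open>D * p + a\<close> with a digit \<open>a\<close>, so the only edge of \<open>G\<^sub>S\<close> entering \<open>m\<close> comes
  from its parent \<open>p\<close>.  A representation of \<open>n\<close> with \<open>k\<close> digits is then exactly a \<open>k\<close>-step
  walk from \<open>n\<close> back to \<open>0\<close> under the parent map, the digits being read off along the way.
  Every integer returns to \<open>0\<close> iff the graph is connected and \<open>0\<close> is periodic, i.e. lies on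
  the cycle; two return times of \<open>n\<close> differ by a multiple of the period \<open>L\<close> of \<open>0\<close>, and the
  extra digits come in blocks of \<open>L\<close> read along the cycle.\<close>

definition parent_graph :: "('a \<Rightarrow> 'a) \<Rightarrow> ('a \<times> 'a) set" where
  "parent_graph f = {(f y, y) | y. True}"

lemma in_parent_graph_iff [simp]: "(x, y) \<in> parent_graph f \<longleftrightarrow> x = f y"
  by (auto simp: parent_graph_def)

lemma funpow_rtrancl_parent_graph: "((f ^^ j) x, x) \<in> (parent_graph f)\<^sup>*"
proof (induction j)
  case (Suc j)
  have "((f ^^ Suc j) x, (f ^^ j) x) \<in> parent_graph f" by simp
  from this Suc.IH show ?case by (rule converse_rtrancl_into_rtrancl)
qed simp

lemma undirected_path_common_ancestor:
  assumes "(x, y) \<in> (parent_graph f \<union> (parent_graph f)\<inverse>)\<^sup>*"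
  shows "\<exists>i j. (f ^^ i) x = (f ^^ j) y"
  using assms
proof (induction rule: rtrancl_induct)
  case base
  show ?case by (metis funpow_0)
next
  case (step y z)
  then obtain i j where ij: "(f ^^ i) x = (f ^^ j) y" by blast
  from step.hyps(2) consider "y = f z" | "z = f y" by auto
  then show ?case
  proof cases
    case 1
    then have "(f ^^ i) x = (f ^^ Suc j) z" using ij by (simp add: funpow_swap1)
    then show ?thesis by blast
  next
    case 2
    then have "(f ^^ Suc i) x = (f ^^ j) z" using ij by (simp add: funpow_swap1)
    then show ?thesis by blast
  qed
qed

lemma weakly_connected_parent_graph_iff:
  "weakly_connected (parent_graph f) \<longleftrightarrow> (\<forall>x y. \<exists>i j. (f ^^ i) x = (f ^^ j) y)"
proof
  assume "weakly_connected (parent_graph f)"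
  then show "\<forall>x y. \<exists>i j. (f ^^ i) x = (f ^^ j) y"
    unfolding weakly_connected_def by (blast intro: undirected_path_common_ancestor)
next
  assume common: "\<forall>x y. \<exists>i j. (f ^^ i) x = (f ^^ j) y"
  let ?G = "parent_graph f"
  have up: "(x, (f ^^ i) x) \<in> (?G \<union> ?G\<inverse>)\<^sup>*" for x i
  proof -
    have "(x, (f ^^ i) x) \<in> (?G\<inverse>)\<^sup>*"
      using funpow_rtrancl_parent_graph by (simp add: rtrancl_converse)
    then show ?thesis by (rule rtrancl_mono[THEN subsetD, rotated]) blast
  qed
  have down: "((f ^^ j) y, y) \<in> (?G \<union> ?G\<inverse>)\<^sup>*" for y j
    using funpow_rtrancl_parent_graph by (rule rtrancl_mono[THEN subsetD, rotated]) blast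
  show "weakly_connected ?G"
    unfolding weakly_connected_def
  proof (intro allI)
    fix x y
    obtain i j where "(f ^^ i) x = (f ^^ j) y" using common by blast
    then show "(x, y) \<in> (?G \<union> ?G\<inverse>)\<^sup>*"
      using up[of x i] down[of j y] by (metis rtrancl_trans)
  qed
qed

lemma funpow_periodic_mult:
  "(f ^^ p) z = z \<Longrightarrow> (f ^^ (m * p)) z = z"
  by (induction m) (simp_all add: funpow_add)

lemma inj_on_funpow_below_period:
  assumes period: "(f ^^ p) z = z" and minimal: "\<And>j. 0 < j \<Longrightarrow> j < p \<Longrightarrow> (f ^^ j) z \<noteq> z"
  shows "inj_on (\<lambda>i. (f ^^ i) z) {..<p}"
proof -
  have no_collision: False if "a < b" "b < p" "(f ^^ a) z = (f ^^ b) z" for a b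
  proof -
    have "(f ^^ (p - b + a)) z = (f ^^ (p - b)) ((f ^^ a) z)" by (simp add: funpow_add)
    also have "\<dots> = (f ^^ (p - b + b)) z" using that(3) by (simp add: funpow_add)
    also have "\<dots> = z" using period that(2) by simp
    finally have "(f ^^ (p - b + a)) z = z" .
    moreover have "0 < p - b + a" "p - b + a < p" using that(1,2) by linarith+
    ultimately show False using minimal[of "p - b + a"] by simp
  qed
  show ?thesis
  proof (rule inj_onI)
    fix a b assume "a \<in> {..<p}" "b \<in> {..<p}" "(f ^^ a) z = (f ^^ b) z"
    then show "a = b"
      using no_collision[of a b] no_collision[of b a] by (cases a b rule: linorder_cases) auto
  qed
qed

lemma dir_cycle_parent_graph_step:
  assumes "dir_cycle (parent_graph f) cs" "i < length cs"
  shows "f (cs ! (Suc i mod length cs)) = cs ! i"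
proof -
  have "(cs ! i, cs ! ((i + 1) mod length cs)) \<in> parent_graph f"
    using assms unfolding dir_cycle_def by blast
  then show ?thesis by simp
qed

lemma funpow_dir_cycle_parent_graph:
  assumes cycle: "dir_cycle (parent_graph f) cs" and "i < length cs"
  shows "(f ^^ j) (cs ! ((i + j) mod length cs)) = cs ! i"
proof (induction j)
  case 0
  show ?case using assms(2) by simp
next
  case (Suc j)
  let ?m = "(i + j) mod length cs"
  have "0 < length cs" using assms(2) by linarith
  then have m: "?m < length cs" by simp
  then have "f (cs ! ((i + Suc j) mod length cs)) = cs ! ?m"
    using dir_cycle_parent_graph_step[OF cycle m] by (simp add: mod_Suc_eq)
  with Suc show ?case by (simp add: funpow_Suc_right del: funpow.simps)
qed

lemma dir_cycle_parent_graph_period: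
  assumes cycle: "dir_cycle (parent_graph f) cs" and "z \<in> set cs"
  shows "(f ^^ length cs) z = z"
proof -
  obtain i where "i < length cs" "cs ! i = z" using assms(2) by (metis in_set_conv_nth)
  then show ?thesis using funpow_dir_cycle_parent_graph[OF cycle, of i "length cs"] by simp
qed

lemma dir_cycle_parent_graph_if_periodic:
  assumes "0 < k" "(f ^^ k) z = z"
  shows "\<exists>cs. dir_cycle (parent_graph f) cs \<and> z \<in> set cs"
proof -
  define p where "p = (LEAST p. 0 < p \<and> (f ^^ p) z = z)"
  have p: "0 < p" "(f ^^ p) z = z"
    using LeastI[of "\<lambda>p. 0 < p \<and> (f ^^ p) z = z", OF conjI[OF assms]] unfolding p_def by auto
  have minimal: "(f ^^ j) z \<noteq> z" if "0 < j" "j < p" for j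
    using not_less_Least[of j "\<lambda>p. 0 < p \<and> (f ^^ p) z = z"] that unfolding p_def by blast
  \<comment> \<open>edges point from \<open>f y\<close> to \<open>y\<close>, so the orbit of \<open>z\<close> read backwards is a cycle\<close>
  define cs where "cs = rev (map (\<lambda>i. (f ^^ i) z) [0..<p])"
  have length_cs: "length cs = p" unfolding cs_def by simp
  have nth_cs: "cs ! i = (f ^^ (p - Suc i)) z" if "i < p" for i
    using that unfolding cs_def by (simp add: rev_nth)
  have "distinct cs"
    unfolding cs_def using inj_on_funpow_below_period[OF p(2) minimal]
    by (simp add: distinct_map atLeast0LessThan)
  moreover have "\<forall>i < p. (cs ! i, cs ! ((i + 1) mod p)) \<in> parent_graph f"
  proof (intro allI impI)
    fix i assume "i < p"
    show "(cs ! i, cs ! ((i + 1) mod p)) \<in> parent_graph f"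
    proof (cases "Suc i < p")
      case True
      then have "p - Suc i = Suc (p - Suc (Suc i))" by simp
      then show ?thesis using True by (simp add: nth_cs funpow_swap1)
    next
      case False
      then have "Suc i = p" using \<open>i < p\<close> by simp
      have "(f ^^ (p - 1)) (f z) = (f ^^ p) z"
        using p(1) by (metis Suc_pred' comp_apply funpow_Suc_right)
      then show ?thesis using p \<open>Suc i = p\<close> by (simp add: nth_cs funpow_swap1)
    qed
  qed
  moreover have "cs \<noteq> []" using p(1) length_cs by auto
  ultimately have "dir_cycle (parent_graph f) cs"
    unfolding dir_cycle_def length_cs by blast
  moreover have "z \<in> set cs"
  proof -
    have "p - 1 < length cs" using p(1) length_cs by simp
    moreover have "cs ! (p - 1) = z" using nth_cs[of "p - 1"] p by simp
    ultimately show ?thesis by (metis nth_mem)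
  qed
  ultimately show ?thesis by (intro exI[of _ cs] conjI)
qed

lemma on_dir_cycle_parent_graph_iff:
  "(\<exists>cs. dir_cycle (parent_graph f) cs \<and> z \<in> set cs) \<longleftrightarrow> (\<exists>k>0. (f ^^ k) z = z)"
proof
  assume "\<exists>cs. dir_cycle (parent_graph f) cs \<and> z \<in> set cs"
  then obtain cs where cycle: "dir_cycle (parent_graph f) cs" and z: "z \<in> set cs" by blast
  have "0 < length cs" using z by (cases cs) auto
  with dir_cycle_parent_graph_period[OF cycle z] show "\<exists>k>0. (f ^^ k) z = z" by blast
next
  assume "\<exists>k>0. (f ^^ k) z = z"
  then obtain k where "0 < k" "(f ^^ k) z = z" by blast
  then show "\<exists>cs. dir_cycle (parent_graph f) cs \<and> z \<in> set cs"
    by (rule dir_cycle_parent_graph_if_periodic)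
qed

theorem funpow_reaches_everywhere_iff:
  "(\<forall>x. \<exists>k>0. (f ^^ k) x = z) \<longleftrightarrow>
     weakly_connected (parent_graph f) \<and> (\<exists>k>0. (f ^^ k) z = z)"
proof
  assume reach: "\<forall>x. \<exists>k>0. (f ^^ k) x = z"
  have "\<exists>i j. (f ^^ i) x = (f ^^ j) y" for x y
  proof -
    obtain i j where "(f ^^ i) x = z" "(f ^^ j) y = z" using reach by meson
    then show ?thesis by metis
  qed
  then show "weakly_connected (parent_graph f) \<and> (\<exists>k>0. (f ^^ k) z = z)"
    using reach weakly_connected_parent_graph_iff by blast
next
  assume "weakly_connected (parent_graph f) \<and> (\<exists>k>0. (f ^^ k) z = z)"
  then obtain k where conn: "weakly_connected (parent_graph f)" and "0 < k" "(f ^^ k) z = z"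
    by blast
  show "\<forall>x. \<exists>k>0. (f ^^ k) x = z"
  proof
    fix x
    obtain i j where ij: "(f ^^ i) x = (f ^^ j) z"
      using conn unfolding weakly_connected_parent_graph_iff by blast
    define M where "M = Suc j * k"
    have "Suc j \<le> M" using \<open>0 < k\<close> mult_le_mono2[of 1 k "Suc j"] unfolding M_def by simp
    have "(f ^^ (i + (M - j))) x = (f ^^ (M - j)) ((f ^^ j) z)"
      using ij by (simp add: funpow_add add.commute[of i])
    also have "\<dots> = (f ^^ M) z"
      using \<open>Suc j \<le> M\<close> by (simp flip: comp_apply[of "f ^^ _"] funpow_add)
    also have "\<dots> = z"
      unfolding M_def using \<open>(f ^^ k) z = z\<close> by (rule funpow_periodic_mult)
    finally show "\<exists>k>0. (f ^^ k) x = z" using \<open>Suc j \<le> M\<close> by (intro exI[of _ "i + (M - j)"]) simp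
  qed
qed

lemma funpow_return_times_dvd:
  assumes "0 < p" and period: "(f ^^ p) z = z"
    and minimal: "\<And>j. 0 < j \<Longrightarrow> j < p \<Longrightarrow> (f ^^ j) z \<noteq> z"
    and "(f ^^ k) x = z" "(f ^^ k') x = z" "k \<le> k'"
  shows "p dvd k' - k"
proof -
  have "(f ^^ (k' - k)) z = (f ^^ (k' - k + k)) x"
    using assms(4) by (simp add: funpow_add)
  also have "\<dots> = z" using assms(5,6) by simp
  finally have "(f ^^ ((k' - k) mod p)) z = z"
    using funpow_mod_eq[where f = f and x = z and n = p and m = "k' - k", OF period] by simp
  then have "(k' - k) mod p = 0"
    using minimal[of "(k' - k) mod p"] \<open>0 < p\<close> by (meson mod_less_divisor neq0_conv)
  then show ?thesis by (simp add: dvd_eq_mod_eq_0)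
qed

lemma digits_value_snoc: "digits_value D (bs @ [b]) = D * digits_value D bs + b"
proof -
  have "digits_value D (bs @ [b]) = (\<Sum>j<Suc (length bs). (b # rev bs) ! j * D ^ j)"
    unfolding digits_value_def by simp
  also have "\<dots> = b + (\<Sum>j<length bs. rev bs ! j * D ^ Suc j)"
    by (subst sum.lessThan_Suc_shift) simp
  also have "\<dots> = b + D * digits_value D bs"
    unfolding digits_value_def by (simp add: sum_distrib_left algebra_simps)
  finally show ?thesis by simp
qed

locale digit_system =
  fixes D :: int and A :: "int set"
  assumes base_nonzero: "D \<noteq> 0"
    and unique_digit: "\<exists>!a. a \<in> A \<and> D dvd m - a"
begin

definition digit :: "int \<Rightarrow> int" where
  "digit m = (THE a. a \<in> A \<and> D dvd m - a)"

definition parent :: "int \<Rightarrow> int" where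
  "parent m = (m - digit m) div D"

lemma digit_in_digits: "digit m \<in> A"
  and dvd_sub_digit: "D dvd m - digit m"
  using theI'[OF unique_digit[of m]] unfolding digit_def by blast+

lemma parent_digit_eq: "D * parent m + digit m = m"
  using dvd_sub_digit[of m] unfolding parent_def by simp

lemma digit_step [simp]: "a \<in> A \<Longrightarrow> digit (D * x + a) = a"
  unfolding digit_def by (rule the1_equality[OF unique_digit]) simp

lemma parent_step [simp]: "a \<in> A \<Longrightarrow> parent (D * x + a) = x"
  unfolding parent_def using base_nonzero by simp

lemma digit_decomposition_iff: "b \<in> A \<and> n = D * p + b \<longleftrightarrow> b = digit n \<and> p = parent n"
  using parent_digit_eq[of n] digit_in_digits[of n] by auto

lemma cs_edges_eq_parent_graph: "cs_edges D A = parent_graph parent"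
proof (rule set_eqI, clarify)
  fix x y
  have "(parent y, D * parent y + digit y) \<in> cs_edges D A"
    unfolding cs_edges_def using digit_in_digits by blast
  then show "(x, y) \<in> cs_edges D A \<longleftrightarrow> (x, y) \<in> parent_graph parent"
    by (auto simp: cs_edges_def parent_digit_eq)
qed

fun low_digits :: "int \<Rightarrow> nat \<Rightarrow> int list" where
  "low_digits n 0 = []"
| "low_digits n (Suc k) = low_digits (parent n) k @ [digit n]"

lemma length_low_digits [simp]: "length (low_digits n k) = k"
  by (induction k arbitrary: n) auto

lemma low_digits_add: "low_digits n (k + m) = low_digits ((parent ^^ k) n) m @ low_digits n k"
  by (induction k arbitrary: n) (auto simp: funpow_Suc_right simp del: funpow.simps)

lemma digit_string_iff:
  "set bs \<subseteq> A \<and> digits_value D bs = n \<longleftrightarrow>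
     (parent ^^ length bs) n = 0 \<and> bs = low_digits n (length bs)"
proof (induction bs arbitrary: n rule: rev_induct)
  case Nil
  show ?case by (simp add: digits_value_def)
next
  case (snoc b bs)
  have "set (bs @ [b]) \<subseteq> A \<and> digits_value D (bs @ [b]) = n \<longleftrightarrow>
      b = digit n \<and> set bs \<subseteq> A \<and> digits_value D bs = parent n"
    using digit_decomposition_iff[of b n "digits_value D bs"] by (auto simp: digits_value_snoc)
  also have "\<dots> \<longleftrightarrow>
      b = digit n \<and> (parent ^^ length bs) (parent n) = 0 \<and> bs = low_digits (parent n) (length bs)"
    using snoc.IH by simp
  also have "\<dots> \<longleftrightarrow>
      (parent ^^ length (bs @ [b])) n = 0 \<and> bs @ [b] = low_digits n (length (bs @ [b]))"
    by (auto simp: funpow_Suc_right simp del: funpow.simps)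
  finally show ?case .
qed

lemma is_rep_iff:
  "is_rep D A n bs \<longleftrightarrow> bs \<noteq> [] \<and> (parent ^^ length bs) n = 0 \<and> bs = low_digits n (length bs)"
  unfolding is_rep_def using digit_string_iff by blast

lemma ex_is_rep_iff: "(\<exists>bs. is_rep D A n bs) \<longleftrightarrow> (\<exists>k>0. (parent ^^ k) n = 0)"
proof
  assume "\<exists>bs. is_rep D A n bs"
  then obtain bs where "is_rep D A n bs" ..
  then have "bs \<noteq> []" "(parent ^^ length bs) n = 0" using is_rep_iff[of n bs] by simp_all
  then show "\<exists>k>0. (parent ^^ k) n = 0" by (intro exI[of _ "length bs"]) simp
next
  assume "\<exists>k>0. (parent ^^ k) n = 0"
  then obtain k where "0 < k" "(parent ^^ k) n = 0" by blast
  then have "is_rep D A n (low_digits n k)" unfolding is_rep_iff by (simp flip: length_greater_0_conv)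
  then show "\<exists>bs. is_rep D A n bs" by blast
qed

theorem all_representable_iff:
  "(\<forall>n. \<exists>bs. is_rep D A n bs) \<longleftrightarrow>
     weakly_connected (cs_edges D A) \<and> (\<exists>cs. dir_cycle (cs_edges D A) cs \<and> 0 \<in> set cs)"
  by (simp add: ex_is_rep_iff cs_edges_eq_parent_graph on_dir_cycle_parent_graph_iff
      funpow_reaches_everywhere_iff)

lemma low_digits_period:
  assumes "(parent ^^ L) 0 = 0"
  shows "low_digits 0 (m * L) = concat (replicate m (low_digits 0 L))"
proof (induction m)
  case (Suc m)
  have "low_digits 0 (Suc m * L) = low_digits ((parent ^^ L) 0) (m * L) @ low_digits 0 L"
    using low_digits_add[of 0 L "m * L"] by (simp add: add.commute)
  also have "\<dots> = concat (replicate m (low_digits 0 L) @ [low_digits 0 L])"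
    using Suc assms by simp
  also have "\<dots> = concat (replicate (Suc m) (low_digits 0 L))"
    by (simp only: replicate_append_same replicate_Suc)
  finally show ?case .
qed simp

lemma is_rep_extends_by_period:
  assumes "0 < L" and period: "(parent ^^ L) 0 = 0"
    and minimal: "\<And>j. 0 < j \<Longrightarrow> j < L \<Longrightarrow> (parent ^^ j) 0 \<noteq> 0"
    and xs: "is_rep D A n xs" and ys: "is_rep D A n ys" and "length xs \<le> length ys"
  shows "\<exists>m. ys = concat (replicate m (low_digits 0 L)) @ xs"
proof -
  have xs_zero: "(parent ^^ length xs) n = 0" and xs_eq: "xs = low_digits n (length xs)"
    using xs is_rep_iff[of n xs] by blast+
  have ys_zero: "(parent ^^ length ys) n = 0" and ys_eq: "ys = low_digits n (length ys)"
    using ys is_rep_iff[of n ys] by blast+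
  obtain m where "length ys - length xs = L * m"
    using funpow_return_times_dvd[OF \<open>0 < L\<close> period minimal xs_zero ys_zero \<open>length xs \<le> length ys\<close>]
    by (rule dvdE)
  then have "length ys = length xs + m * L"
    using \<open>length xs \<le> length ys\<close> mult.commute[of L m] by linarith
  then have "ys = low_digits n (length xs + m * L)" using ys_eq by simp
  also have "\<dots> = low_digits ((parent ^^ length xs) n) (m * L) @ low_digits n (length xs)"
    by (rule low_digits_add)
  also have "\<dots> = concat (replicate m (low_digits 0 L)) @ xs"
    using xs_zero xs_eq[symmetric] low_digits_period[OF period] by simp
  finally show ?thesis by blast
qed

lemma digit_path_low_digits:
  assumes path: "\<forall>t\<in>{1..L}. e t \<in> A \<and> c t = D * c (t - 1) + e t" and "t \<le> L"
  shows "low_digits (c t) t = map e [1..<Suc t]"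
  using assms(2)
proof (induction t)
  case (Suc t)
  have "Suc t \<in> {1..L}" using Suc.prems by simp
  with path have "e (Suc t) \<in> A" "c (Suc t) = D * c t + e (Suc t)" by auto
  then show ?case using Suc by simp
qed simp

lemma digit_path_funpow_parent:
  assumes path: "\<forall>t\<in>{1..L}. e t \<in> A \<and> c t = D * c (t - 1) + e t" and "j \<le> t" "t \<le> L"
  shows "(parent ^^ j) (c t) = c (t - j)"
  using assms(2)
proof (induction j)
  case (Suc j)
  have "t - j \<in> {1..L}" using Suc.prems \<open>t \<le> L\<close> by auto
  with path have "e (t - j) \<in> A" "c (t - j) = D * c (t - j - 1) + e (t - j)" by auto
  then show ?case using Suc by simp
qed simp

theorem is_rep_unique_up_to_cycle_block:
  assumes "1 \<le> L" "c 0 = 0" "c L = 0"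
    and path: "\<forall>t\<in>{1..L}. e t \<in> A \<and> c t = D * c (t - 1) + e t"
    and "inj_on c {0..<L}" and "is_rep D A n bs" "is_rep D A n cs"
  shows "(\<exists>m. bs = concat (replicate m (map e [1..<L+1])) @ cs) \<or>
    (\<exists>m. cs = concat (replicate m (map e [1..<L+1])) @ bs)"
proof -
  have iterate_zero: "(parent ^^ j) 0 = c (L - j)" if "j \<le> L" for j
    using digit_path_funpow_parent[OF path that order.refl] \<open>c L = 0\<close> by simp
  have period: "(parent ^^ L) 0 = 0" using iterate_zero[of L] \<open>c 0 = 0\<close> by simp
  have minimal: "(parent ^^ j) 0 \<noteq> 0" if "0 < j" "j < L" for j
  proof
    assume "(parent ^^ j) 0 = 0"
    then have "c (L - j) = c 0" using iterate_zero[of j] that \<open>c 0 = 0\<close> by simp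
    then have "L - j = 0" using \<open>inj_on c {0..<L}\<close> that by (auto dest: inj_onD)
    then show False using that by simp
  qed
  have block: "low_digits 0 L = map e [1..<L+1]"
    using digit_path_low_digits[OF path order.refl] \<open>c L = 0\<close> by simp
  have "0 < L" using \<open>1 \<le> L\<close> by simp
  have extends: "\<exists>m. ys = concat (replicate m (map e [1..<L+1])) @ xs"
    if "is_rep D A n xs" "is_rep D A n ys" "length xs \<le> length ys" for xs ys
    using is_rep_extends_by_period[OF \<open>0 < L\<close> period minimal that] unfolding block .
  show ?thesis
  proof (cases "length cs \<le> length bs")
    case True
    then show ?thesis using extends[OF \<open>is_rep D A n cs\<close> \<open>is_rep D A n bs\<close>] by blast
  next
    case False
    then show ?thesis using extends[OF \<open>is_rep D A n bs\<close> \<open>is_rep D A n cs\<close>] by simp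
  qed
qed

end

lemma digit_system_if_residue_system:
  assumes "0 < d" "D = int d \<or> D = - int d"
    and card: "card A = d" and residues: "(\<lambda>x. x mod int d) ` A = {0..<int d}"
  shows "digit_system D A"
proof
  show "D \<noteq> 0" using assms(1,2) by auto
next
  fix m
  have dvd_iff: "D dvd m - a \<longleftrightarrow> a mod int d = m mod int d" for a
    using assms(2) by (auto simp: mod_eq_dvd_iff dvd_diff_commute)
  have "finite A" using card \<open>0 < d\<close> card_ge_0_finite by blast
  then have inj: "inj_on (\<lambda>x. x mod int d) A"
    by (rule eq_card_imp_inj_on) (simp add: residues card)
  have "m mod int d \<in> (\<lambda>x. x mod int d) ` A" using residues \<open>0 < d\<close> by simp
  then obtain a where "a \<in> A" "a mod int d = m mod int d" by auto
  then show "\<exists>!a. a \<in> A \<and> D dvd m - a"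
    using inj_onD[OF inj] unfolding dvd_iff by (metis (mono_tags, lifting))
qed

theorem mainTheorem9:
  fixes d :: nat and D :: int and A :: "int set"
  assumes "d \<ge> 2"
    and "D = int d \<or> D = - int d"
    and "card A = d"
    and "(\<lambda>x. x mod int d) ` A = {0..<int d}"
  shows "((\<forall>n. \<exists>bs. is_rep D A n bs) \<longleftrightarrow>
           (weakly_connected (cs_edges D A) \<and>
            (\<exists>cs. dir_cycle (cs_edges D A) cs \<and> 0 \<in> set cs)))
       \<and> ((weakly_connected (cs_edges D A) \<and>
            (\<exists>cs. dir_cycle (cs_edges D A) cs \<and> 0 \<in> set cs)) \<longrightarrow>
          (\<forall>L e c. L \<ge> 1 \<and> c 0 = 0 \<and> c L = 0 \<and>
              (\<forall>t\<in>{1..L}. e t \<in> A \<and> c t = D * c (t - 1) + e t) \<and>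
              inj_on c {0..<L} \<longrightarrow>
             (\<forall>n bs cs. is_rep D A n bs \<and> is_rep D A n cs \<longrightarrow>
                (\<exists>m. bs = concat (replicate m (map e [1..<L+1])) @ cs) \<or>
                (\<exists>m. cs = concat (replicate m (map e [1..<L+1])) @ bs))))"
proof -
  interpret digit_system D A
    by (rule digit_system_if_residue_system) (use assms in simp_all)
  show ?thesis
    using all_representable_iff is_rep_unique_up_to_cycle_block by blast
qed

end
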